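(* For $\tau,t\in\mathbb{R}$ let $$\mu_0(\tau,t)=\int_{-\infty}^{\infty}\exp(-x^6+\tau x^4+tx^2)\,dx.$$ Then $$\mu_0(\tau,t)=\int_0^\infty s^{-1/2}\exp(-s^3+\tau s^2+ts)\,ds,$$ and $\varphi=\mu_0(\tau,t)$ satisfies $$\frac{\partial^3\varphi}{\partial t^3}-\tfrac23\tau\frac{\partial^2\varphi}{\partial t^2}-\tfrac13t\frac{\partial\varphi}{\partial t}-\tfrac16\varphi=0.$$ *)

theory Defs
  imports "HOL-Analysis.Analysis"
begin

definition mu0 :: "real \<Rightarrow> real \<Rightarrow> real" where
  "mu0 \<tau> t = integral\<^sup>L lborel (\<lambda>x. exp (- (x ^ 6) + \<tau> * x ^ 4 + t * x ^ 2))"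

end

theory Submission
  imports Defs "HOL-Probability.Distributions" "HOL-Real_Asymp.Real_Asymp"
begin

(* Write E_t(x) = exp(-x^6 + tau x^4 + t x^2). Since -x^6 dominates, E_t is bounded by a multiple
   of the Gaussian density, so all moments m_k(t) = int x^(2k) E_t(x) dx exist. As
   d/dt E_t = x^2 E_t, differentiation under the integral sign (dominated convergence, using
   |(e^(h x^2) - 1)/h| <= e^(2 x^2) for |h| < 1) gives m_k' = m_(k+1); hence the k-th derivative of
   mu0 is m_k. The differential equation is int (x E_t(x))' dx = 0, because
   (x E_t)' = (1 + 2t x^2 + 4 tau x^4 - 6 x^6) E_t and x E_t vanishes at both infinities.
   The half-line formula is the substitution s = x^2 in the even integrand. *)

lemma bounded_above_if_filterlim_at_bot:
  fixes f :: "real \<Rightarrow> real"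
  assumes "continuous_on UNIV f" "filterlim f at_bot at_top" "filterlim f at_bot at_bot"
  obtains M where "\<And>x. f x \<le> M"
proof -
  obtain b where b: "\<And>x. x \<ge> b \<Longrightarrow> f x \<le> 0"
    using assms(2) by (auto simp: filterlim_at_bot eventually_at_top_linorder)
  obtain a where a: "\<And>x. x \<le> a \<Longrightarrow> f x \<le> 0"
    using assms(3) by (auto simp: filterlim_at_bot eventually_at_bot_linorder)
  have "compact (f ` {a..b})"
    using assms(1) by (intro compact_continuous_image) (auto intro: continuous_on_subset)
  then obtain k where k: "\<forall>x\<in>{a..b}. \<bar>f x\<bar> \<le> k"
    by (auto dest!: compact_imp_bounded simp: bounded_real)
  have "f x \<le> max 0 k" for x
  proof (cases "x \<le> a \<or> x \<ge> b")
    case False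
    then have "\<bar>f x\<bar> \<le> k"
      using k by auto
    then show ?thesis
      by simp
  qed (use a b in force)
  then show ?thesis ..
qed

lemma tendsto_integral_dominated_at:
  fixes F :: "'p::first_countable_topology \<Rightarrow> 'a \<Rightarrow> 'b::{banach, second_countable_topology}"
  assumes "\<And>h. F h \<in> borel_measurable M" "G \<in> borel_measurable M" "integrable M w"
    and lim: "AE x in M. ((\<lambda>h. F h x) \<longlongrightarrow> G x) (at a)"
    and bound: "\<forall>\<^sub>F h in at a. AE x in M. norm (F h x) \<le> w x"
  shows "((\<lambda>h. integral\<^sup>L M (F h)) \<longlongrightarrow> integral\<^sup>L M G) (at a)"
  unfolding tendsto_at_iff_sequentially comp_def
proof (intro allI impI)
  fix X :: "nat \<Rightarrow> 'p" assume "\<forall>i. X i \<in> UNIV - {a}" "X \<longlonglongrightarrow> a"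
  then have X: "filterlim X (at a) sequentially"
    by (simp add: filterlim_at)
  from filterlim_iff[THEN iffD1, OF X, rule_format, OF bound]
  obtain N where N: "\<And>n. N \<le> n \<Longrightarrow> AE x in M. norm (F (X n) x) \<le> w x"
    by (auto simp: eventually_sequentially)
  show "(\<lambda>n. integral\<^sup>L M (F (X n))) \<longlonglongrightarrow> integral\<^sup>L M G"
  proof (rule LIMSEQ_offset, rule integral_dominated_convergence)
    show "AE x in M. norm (F (X (n + N)) x) \<le> w x" for n
      by (rule N) auto
    show "AE x in M. (\<lambda>n. F (X (n + N)) x) \<longlonglongrightarrow> G x"
      using lim by eventually_elim (intro LIMSEQ_ignore_initial_segment filterlim_compose[OF _ X])
  qed (use assms in auto)
qed

lemma abs_exp_minus_one_le: "\<bar>exp z - 1\<bar> \<le> \<bar>z\<bar> * exp \<bar>z\<bar>" for z :: real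
proof (cases "z \<ge> 0")
  case True
  have "1 - z \<le> exp (- z)"
    using exp_ge_add_one_self[of "- z"] by simp
  then have "(1 - z) * exp z \<le> exp (- z) * exp z"
    by (rule mult_right_mono) simp
  then have "(1 - z) * exp z \<le> 1"
    by (simp add: exp_minus_inverse mult.commute)
  with True show ?thesis
    by (simp add: algebra_simps)
next
  case False
  then have "\<bar>exp z - 1\<bar> = 1 - exp z"
    by simp
  also have "\<dots> \<le> \<bar>z\<bar>"
    using exp_ge_add_one_self[of z] False by linarith
  also have "\<dots> \<le> \<bar>z\<bar> * exp \<bar>z\<bar>"
    using mult_left_mono[of 1 "exp \<bar>z\<bar>" "\<bar>z\<bar>"] by simp
  finally show ?thesis .
qed

lemma abs_exp_difference_quotient_le:
  fixes h y :: real
  assumes "0 \<le> y" "\<bar>h\<bar> \<le> 1"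
  shows "\<bar>(exp (h * y) - 1) / h\<bar> \<le> exp (2 * y)"
proof (cases "h = 0")
  case False
  have "\<bar>exp (h * y) - 1\<bar> \<le> \<bar>h * y\<bar> * exp \<bar>h * y\<bar>"
    by (rule abs_exp_minus_one_le)
  also have "\<dots> \<le> \<bar>h\<bar> * (y * exp y)"
  proof -
    have "exp (\<bar>h\<bar> * y) \<le> exp y"
      using assms mult_right_mono[of "\<bar>h\<bar>" 1 y] by simp
    then have "y * exp (\<bar>h\<bar> * y) \<le> y * exp y"
      using assms(1) by (rule mult_left_mono)
    then show ?thesis
      using assms by (simp add: abs_mult mult.assoc mult_left_mono)
  qed
  also have "\<dots> \<le> \<bar>h\<bar> * exp (2 * y)"
  proof -
    have "y \<le> exp y"
      using exp_ge_add_one_self[of y] by linarith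
    then have "y * exp y \<le> exp y * exp y"
      by (rule mult_right_mono) simp
    then show ?thesis
      by (simp add: mult_left_mono flip: exp_add)
  qed
  finally show ?thesis
    using False by (simp add: divide_le_eq mult.commute)
qed simp

lemma has_real_derivative_integral_exp_mult:
  fixes \<phi> g :: "'a \<Rightarrow> real"
  assumes \<phi>_measurable: "\<phi> \<in> borel_measurable M" and \<phi>_nonneg: "\<And>x. 0 \<le> \<phi> x"
    and integrable: "\<And>s. integrable M (\<lambda>x. exp (s * \<phi> x) * g x)"
  shows "((\<lambda>s. \<integral>x. exp (s * \<phi> x) * g x \<partial>M) has_real_derivative
           (\<integral>x. \<phi> x * exp (t * \<phi> x) * g x \<partial>M)) (at t)"
proof -
  define D where "D h x = exp (t * \<phi> x) * g x * ((exp (h * \<phi> x) - 1) / h)" for h x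
  have g_measurable: "g \<in> borel_measurable M"
    using integrable[of 0] by simp
  have difference_quotient:
    "((\<integral>x. exp ((t + h) * \<phi> x) * g x \<partial>M) - (\<integral>x. exp (t * \<phi> x) * g x \<partial>M)) / h
       = (\<integral>x. D h x \<partial>M)" for h
    using integrable[of "t + h"] integrable[of t]
    by (simp add: D_def exp_add diff_divide_distrib algebra_simps
        flip: Bochner_Integration.integral_diff integral_divide_zero)
  have "((\<lambda>h. \<integral>x. D h x \<partial>M) \<longlongrightarrow> (\<integral>x. \<phi> x * exp (t * \<phi> x) * g x \<partial>M)) (at 0)"
  proof (rule tendsto_integral_dominated_at[where w="\<lambda>x. \<bar>exp ((t + 2) * \<phi> x) * g x\<bar>"])
    show "AE x in M. ((\<lambda>h. D h x) \<longlongrightarrow> \<phi> x * exp (t * \<phi> x) * g x) (at 0)"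
    proof (rule AE_I2)
      fix x
      have "((\<lambda>h. exp (h * \<phi> x)) has_real_derivative \<phi> x) (at 0)"
        by (auto intro!: derivative_eq_intros)
      then have "((\<lambda>h. (exp (h * \<phi> x) - 1) / h) \<longlongrightarrow> \<phi> x) (at 0)"
        by (simp add: DERIV_def)
      from tendsto_mult_left[OF this, of "exp (t * \<phi> x) * g x"]
      show "((\<lambda>h. D h x) \<longlongrightarrow> \<phi> x * exp (t * \<phi> x) * g x) (at 0)"
        unfolding D_def by (simp add: mult_ac)
    qed
    have "\<bar>D h x\<bar> \<le> \<bar>exp ((t + 2) * \<phi> x) * g x\<bar>" if "\<bar>h\<bar> < 1" for h x
    proof -
      have "\<bar>D h x\<bar> \<le> exp (t * \<phi> x) * \<bar>g x\<bar> * exp (2 * \<phi> x)"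
        unfolding D_def abs_mult abs_exp_cancel
        using abs_exp_difference_quotient_le[OF \<phi>_nonneg, of h x] that by (intro mult_left_mono) auto
      also have "\<dots> = \<bar>exp ((t + 2) * \<phi> x) * g x\<bar>"
        by (simp add: abs_mult algebra_simps exp_add)
      finally show ?thesis .
    qed
    then show "\<forall>\<^sub>F h in at 0. AE x in M. norm (D h x) \<le> \<bar>exp ((t + 2) * \<phi> x) * g x\<bar>"
      by (auto simp: eventually_at intro!: exI[of _ 1])
  qed (use integrable g_measurable \<phi>_measurable in \<open>auto simp: D_def\<close>)
  then show ?thesis
    by (simp add: DERIV_def difference_quotient)
qed

lemma integral_even_function:
  fixes f :: "real \<Rightarrow> real"
  assumes f: "integrable lborel f" and even: "\<And>x. f (- x) = f x"
  shows "integral\<^sup>L lborel f = 2 * (LBINT x:{0<..}. f x)"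
proof -
  define P where "P x = indicator {0<..} x * f x" for x :: real
  have P: "integrable lborel P"
    unfolding P_def using integrable_mult_indicator[OF _ f, of "{0<..}"] by simp
  have P_reflected: "integrable lborel (\<lambda>x. P (0 + (- 1) * x))"
    using P by (subst lborel_integrable_real_affine_iff) auto
  have "integral\<^sup>L lborel f = (\<integral>x. P x + P (0 + (- 1) * x) \<partial>lborel)"
  proof (rule integral_cong_AE)
    show "AE x in lborel. f x = P x + P (0 + (- 1) * x)"
      using AE_lborel_singleton[of 0] by eventually_elim (auto simp: P_def even indicator_def)
  qed (use f P P_reflected in auto)
  also have "\<dots> = integral\<^sup>L lborel P + (\<integral>x. P (0 + (- 1) * x) \<partial>lborel)"
    by (rule Bochner_Integration.integral_add[OF P P_reflected])
  also have "(\<integral>x. P (0 + (- 1) * x) \<partial>lborel) = integral\<^sup>L lborel P"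
    using lborel_integral_real_affine[of "- 1" P 0] by simp
  also have "integral\<^sup>L lborel P = (LBINT x:{0<..}. f x)"
    by (simp add: P_def[abs_def] set_lebesgue_integral_def)
  finally show ?thesis
    by simp
qed

lemma set_integral_substitution_square:
  fixes \<Phi> :: "real \<Rightarrow> real"
  assumes "\<And>s. 0 < s \<Longrightarrow> isCont \<Phi> s" "\<And>s. 0 < s \<Longrightarrow> 0 \<le> \<Phi> s"
    and "set_integrable lborel {0<..} (\<lambda>x. \<Phi> (x\<^sup>2) * (2 * x))"
  shows "set_integrable lborel {0<..} \<Phi>"
    and "(LBINT s:{0<..}. \<Phi> s) = (LBINT x:{0<..}. \<Phi> (x\<^sup>2) * (2 * x))"
proof -
  note substitution = interval_integral_substitution_nonneg[where a = 0 and b = \<infinity>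
      and A = 0 and B = \<infinity> and g = "\<lambda>x. x\<^sup>2" and g' = "\<lambda>x. 2 * x" and f = \<Phi>]
  have lim_0: "((ereal \<circ> (\<lambda>x. x\<^sup>2) \<circ> real_of_ereal) \<longlongrightarrow> 0) (at_right 0)"
    unfolding zero_ereal_def ereal_tendsto_simps1 ereal_tendsto_simps2
    by (intro tendsto_eq_intros) auto
  have lim_infinity: "((ereal \<circ> (\<lambda>x::real. x\<^sup>2) \<circ> real_of_ereal) \<longlongrightarrow> \<infinity>) (at_left \<infinity>)"
    unfolding ereal_tendsto_simps1 ereal_tendsto_simps2
    by (intro filterlim_pow_at_top filterlim_ident) auto
  have "set_integrable lborel (einterval 0 \<infinity>) \<Phi> \<and>
      (LBINT x=0..\<infinity>. \<Phi> x) = (LBINT x=0..\<infinity>. \<Phi> (x\<^sup>2) * (2 * x))"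
    by (intro conjI substitution)
      (use assms lim_0 lim_infinity in \<open>auto simp: zero_ereal_def intro!: derivative_eq_intros\<close>)
  then show "set_integrable lborel {0<..} \<Phi>"
    and "(LBINT s:{0<..}. \<Phi> s) = (LBINT x:{0<..}. \<Phi> (x\<^sup>2) * (2 * x))"
    by (simp_all add: zero_ereal_def interval_lebesgue_integral_def)
qed

definition mu0_integrand :: "real \<Rightarrow> real \<Rightarrow> real \<Rightarrow> real" where
  "mu0_integrand \<tau> t x = exp (- (x ^ 6) + \<tau> * x ^ 4 + t * x ^ 2)"

definition mu0_moment :: "real \<Rightarrow> nat \<Rightarrow> real \<Rightarrow> real" where
  "mu0_moment \<tau> k t = (\<integral>x. x ^ (2 * k) * mu0_integrand \<tau> t x \<partial>lborel)"

lemma mu0_eq_mu0_moment_0: "mu0 \<tau> = mu0_moment \<tau> 0"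
  by (simp add: fun_eq_iff mu0_def mu0_moment_def mu0_integrand_def)

lemma mu0_integrand_le_std_normal_density:
  obtains C where "\<And>x. mu0_integrand \<tau> t x \<le> C * std_normal_density x"
proof -
  define p where "p x = - (x ^ 6) + \<tau> * x ^ 4 + t * x ^ 2 + x ^ 2 / 2" for x :: real
  have p_continuous: "continuous_on UNIV p"
    unfolding p_def by (intro continuous_intros) auto
  have "filterlim p at_bot at_top" "filterlim p at_bot at_bot"
    unfolding p_def by real_asymp+
  then obtain M where M: "\<And>x. p x \<le> M"
    using bounded_above_if_filterlim_at_bot[OF p_continuous] by metis
  have "mu0_integrand \<tau> t x \<le> (exp M * sqrt (2 * pi)) * std_normal_density x" for x
  proof -
    have "mu0_integrand \<tau> t x = exp (p x) * exp (- x\<^sup>2 / 2)"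
      by (simp add: p_def mu0_integrand_def flip: exp_add)
    also have "\<dots> \<le> exp M * exp (- x\<^sup>2 / 2)"
      using M[of x] by simp
    finally show ?thesis
      by (simp add: std_normal_density_def)
  qed
  then show ?thesis ..
qed

lemma integrable_mu0_moment_integrand:
  "integrable lborel (\<lambda>x. x ^ (2 * k) * mu0_integrand \<tau> t x)"
proof -
  obtain C where C: "\<And>x. mu0_integrand \<tau> t x \<le> C * std_normal_density x"
    using mu0_integrand_le_std_normal_density[of \<tau> t] by blast
  have "integrable lborel (\<lambda>x. C * (std_normal_density x * x ^ (2 * k)))"
    by (intro integrable_mult_right integrable_std_normal_moment)
  then show ?thesis
  proof (rule Bochner_Integration.integrable_bound)
    show "AE x in lborel. norm (x ^ (2 * k) * mu0_integrand \<tau> t x)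
                           \<le> norm (C * (std_normal_density x * x ^ (2 * k)))"
    proof (rule AE_I2)
      fix x
      have "x ^ (2 * k) * mu0_integrand \<tau> t x \<le> x ^ (2 * k) * (C * std_normal_density x)"
        using C[of x] by (intro mult_left_mono) (simp_all add: power_mult)
      then show "norm (x ^ (2 * k) * mu0_integrand \<tau> t x)
                   \<le> norm (C * (std_normal_density x * x ^ (2 * k)))"
        by (simp add: mu0_integrand_def power_mult mult_ac)
    qed
  qed (simp add: mu0_integrand_def)
qed

lemma integrable_mu0_integrand: "integrable lborel (mu0_integrand \<tau> t)"
  using integrable_mu0_moment_integrand[of 0] by simp

lemma mu0_moment_has_real_derivative:
  "(mu0_moment \<tau> k has_real_derivative mu0_moment \<tau> (Suc k) t) (at t)"
proof -
  define g where "g x = x ^ (2 * k) * mu0_integrand \<tau> 0 x" for x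
  have shift: "x ^ (2 * k) * mu0_integrand \<tau> s x = exp (s * x\<^sup>2) * g x" for s x
    by (simp add: g_def mu0_integrand_def mult_ac flip: exp_add)
  have "mu0_moment \<tau> k = (\<lambda>s. \<integral>x. exp (s * x\<^sup>2) * g x \<partial>lborel)"
    by (simp add: fun_eq_iff mu0_moment_def shift)
  moreover have "mu0_moment \<tau> (Suc k) t = (\<integral>x. x\<^sup>2 * exp (t * x\<^sup>2) * g x \<partial>lborel)"
  proof -
    have "x ^ (2 * Suc k) * mu0_integrand \<tau> t x = x\<^sup>2 * exp (t * x\<^sup>2) * g x" for x
    proof -
      have "x ^ (2 * Suc k) * mu0_integrand \<tau> t x = x\<^sup>2 * (x ^ (2 * k) * mu0_integrand \<tau> t x)"
        by (simp add: power_mult power2_eq_square)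
      also have "\<dots> = x\<^sup>2 * exp (t * x\<^sup>2) * g x"
        by (simp only: shift mult.assoc)
      finally show ?thesis .
    qed
    then show ?thesis
      by (simp add: mu0_moment_def)
  qed
  moreover have "((\<lambda>s. \<integral>x. exp (s * x\<^sup>2) * g x \<partial>lborel) has_real_derivative
          (\<integral>x. x\<^sup>2 * exp (t * x\<^sup>2) * g x \<partial>lborel)) (at t)"
    by (rule has_real_derivative_integral_exp_mult)
      (use integrable_mu0_moment_integrand[of k \<tau>] in \<open>simp_all add: shift\<close>)
  ultimately show ?thesis
    by simp
qed

lemma higher_deriv_mu0: "(deriv ^^ k) (mu0 \<tau>) = mu0_moment \<tau> k"
proof (induction k)
  case (Suc k)
  have "deriv (mu0_moment \<tau> k) = mu0_moment \<tau> (Suc k)"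
    using mu0_moment_has_real_derivative by (simp add: fun_eq_iff DERIV_imp_deriv)
  with Suc.IH show ?case
    by simp
qed (simp add: mu0_eq_mu0_moment_0)

lemma has_real_derivative_x_mu0_integrand:
  "((\<lambda>x. x * mu0_integrand \<tau> t x) has_real_derivative
      mu0_integrand \<tau> t x + 2 * t * (x ^ (2 * 1) * mu0_integrand \<tau> t x)
      + 4 * \<tau> * (x ^ (2 * 2) * mu0_integrand \<tau> t x) - 6 * (x ^ (2 * 3) * mu0_integrand \<tau> t x)) (at x)"
  unfolding mu0_integrand_def
  by (auto intro!: derivative_eq_intros simp: algebra_simps power_mult numeral_eq_Suc)

lemma mu0_moment_ode:
  "mu0_moment \<tau> 3 t - 2/3 * \<tau> * mu0_moment \<tau> 2 t - 1/3 * t * mu0_moment \<tau> 1 t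
     - 1/6 * mu0_moment \<tau> 0 t = 0"
proof -
  define f' where "f' x = mu0_integrand \<tau> t x + 2 * t * (x ^ (2 * 1) * mu0_integrand \<tau> t x)
      + 4 * \<tau> * (x ^ (2 * 2) * mu0_integrand \<tau> t x) - 6 * (x ^ (2 * 3) * mu0_integrand \<tau> t x)" for x
  have integrable: "integrable lborel f'"
    unfolding f'_def using integrable_mu0_integrand integrable_mu0_moment_integrand
    by (intro Bochner_Integration.integrable_add Bochner_Integration.integrable_diff integrable_mult_right)
  have "(LBINT x=-\<infinity>..\<infinity>. f' x) = 0 - 0"
  proof (rule interval_integral_FTC_integrable[where F = "\<lambda>x. x * mu0_integrand \<tau> t x"])
    show "((\<lambda>x. x * mu0_integrand \<tau> t x) has_vector_derivative f' x) (at x)" for x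
      unfolding f'_def has_real_derivative_iff_has_vector_derivative[symmetric]
      by (rule has_real_derivative_x_mu0_integrand)
    show "isCont f' x" for x
      unfolding f'_def mu0_integrand_def by (intro continuous_intros)
    show "set_integrable lborel (einterval (- \<infinity>) \<infinity>) f'"
      using integrable by (simp add: set_integrable_def)
    show "(((\<lambda>x. x * mu0_integrand \<tau> t x) \<circ> real_of_ereal) \<longlongrightarrow> 0) (at_right (- \<infinity>))"
      "(((\<lambda>x. x * mu0_integrand \<tau> t x) \<circ> real_of_ereal) \<longlongrightarrow> 0) (at_left \<infinity>)"
      unfolding ereal_tendsto_simps1 mu0_integrand_def by real_asymp+
  qed simp
  then have "integral\<^sup>L lborel f' = 0"
    by (simp add: interval_lebesgue_integral_def set_lebesgue_integral_def)
  moreover have "integral\<^sup>L lborel f' = mu0_moment \<tau> 0 t + 2 * t * mu0_moment \<tau> 1 t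
      + 4 * \<tau> * mu0_moment \<tau> 2 t - 6 * mu0_moment \<tau> 3 t"
    unfolding f'_def mu0_moment_def
    using integrable_mu0_integrand[of \<tau> t] integrable_mu0_moment_integrand[of 1 \<tau> t]
      integrable_mu0_moment_integrand[of 2 \<tau> t] integrable_mu0_moment_integrand[of 3 \<tau> t]
    by simp
  ultimately show ?thesis
    by (simp add: field_simps)
qed

lemma mu0_eq_half_line_integral:
  "set_integrable lborel {0<..} (\<lambda>s. s powr (-1/2) * exp (- (s ^ 3) + \<tau> * s ^ 2 + t * s))
   \<and> mu0 \<tau> t = (LBINT s:{0<..}. s powr (-1/2) * exp (- (s ^ 3) + \<tau> * s ^ 2 + t * s))"
proof -
  define \<Phi> where "\<Phi> s = s powr (-1/2) * exp (- (s ^ 3) + \<tau> * s ^ 2 + t * s)" for s :: real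
  have square: "\<Phi> (x\<^sup>2) * (2 * x) = 2 * mu0_integrand \<tau> t x" if "0 < x" for x
  proof -
    have "(x\<^sup>2) powr (-1/2) = 1 / x"
      using that by (simp add: powr_minus_divide powr_half_sqrt)
    then show ?thesis
      using that by (simp add: \<Phi>_def mu0_integrand_def flip: power_mult)
  qed
  have "set_integrable lborel {0<..} (\<lambda>x. 2 * mu0_integrand \<tau> t x)"
    unfolding set_integrable_def
    using integrable_mult_indicator[OF _ integrable_mult_right[OF integrable_mu0_integrand]] by simp
  then have \<Phi>_square_integrable: "set_integrable lborel {0<..} (\<lambda>x. \<Phi> (x\<^sup>2) * (2 * x))"
    by (rule set_integrable_cong[THEN iffD1, rotated -1]) (simp_all add: square)
  have \<Phi>_continuous: "isCont \<Phi> s" if "0 < s" for s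
    unfolding \<Phi>_def using that by (intro continuous_intros) auto
  have \<Phi>_nonneg: "0 \<le> \<Phi> s" for s
    by (simp add: \<Phi>_def)
  note substitution = set_integral_substitution_square[OF \<Phi>_continuous \<Phi>_nonneg \<Phi>_square_integrable]
  have "mu0 \<tau> t = 2 * (LBINT x:{0<..}. mu0_integrand \<tau> t x)"
    unfolding mu0_def mu0_integrand_def[symmetric]
    by (rule integral_even_function[OF integrable_mu0_integrand]) (simp add: mu0_integrand_def)
  also have "\<dots> = (LBINT x:{0<..}. \<Phi> (x\<^sup>2) * (2 * x))"
    by (simp add: set_lebesgue_integral_cong square flip: set_integral_mult_right)
  also have "\<dots> = (LBINT s:{0<..}. \<Phi> s)"
    by (rule substitution(2)[symmetric])
  finally show ?thesis
    using substitution(1) by (simp add: \<Phi>_def)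
qed

theorem lemma5p1:
  fixes \<tau> :: real
  shows "integrable lborel (\<lambda>x. exp (- (x ^ 6) + \<tau> * x ^ 4 + t * x ^ 2))
    \<and> set_integrable lborel {0<..} (\<lambda>s. s powr (-1/2) * exp (- (s ^ 3) + \<tau> * s ^ 2 + t * s))
    \<and> mu0 \<tau> t = (LBINT s:{0<..}. s powr (-1/2) * exp (- (s ^ 3) + \<tau> * s ^ 2 + t * s))
    \<and> (\<forall>k<3. \<forall>u. ((deriv ^^ k) (mu0 \<tau>) has_real_derivative (deriv ^^ Suc k) (mu0 \<tau>) u) (at u))
    \<and> (\<forall>u. (deriv ^^ 3) (mu0 \<tau>) u - 2/3 * \<tau> * (deriv ^^ 2) (mu0 \<tau>) u
            - 1/3 * u * deriv (mu0 \<tau>) u - 1/6 * mu0 \<tau> u = 0)"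
proof -
  have "integrable lborel (\<lambda>x. exp (- (x ^ 6) + \<tau> * x ^ 4 + t * x ^ 2))"
    using integrable_mu0_integrand unfolding mu0_integrand_def .
  moreover have "\<forall>k u. ((deriv ^^ k) (mu0 \<tau>) has_real_derivative (deriv ^^ Suc k) (mu0 \<tau>) u) (at u)"
    unfolding higher_deriv_mu0 using mu0_moment_has_real_derivative by blast
  moreover have "(deriv ^^ 3) (mu0 \<tau>) u - 2/3 * \<tau> * (deriv ^^ 2) (mu0 \<tau>) u
            - 1/3 * u * deriv (mu0 \<tau>) u - 1/6 * mu0 \<tau> u = 0" for u
    using mu0_moment_ode[of \<tau> u] higher_deriv_mu0[of 3 \<tau>] higher_deriv_mu0[of 2 \<tau>]
      higher_deriv_mu0[of 1 \<tau>] by (simp add: mu0_eq_mu0_moment_0)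
  ultimately show ?thesis
    using mu0_eq_half_line_integral by blast
qed

end
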